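(* Let $0<\tau\le2^*-1$ be fixed. In the setting below, there exists a sequence $\sigma_\alpha\to0$ of positive numbers depending only on $(\mu_{i,\alpha})_\alpha$ and $(x_{i,\alpha})_\alpha$, $1\le i\le k$, such that for all $\alpha$ and all $x\in M$ $$\Big(\sum_{i=1}^kB_{i,\alpha}(x)\Big)^{2^*-1-\tau}\Big(\sum_{i=1}^k\Theta_{i,\alpha}(x)B_{i,\alpha}(x)\Big)^{\tau}\le\sigma_\alpha\Big(\sum_{i=0}^kB_{i,\alpha}(x)+\sum_{i=1}^kB_{i,\alpha}(x)^{2^*-1}\Big).$$
   Context: $(M,g)$ smooth closed Riemannian manifold, $n\ge3$, $2^*=\frac{2n}{n-2}$; $k\ge1$; $x_{i,\alpha}\in M$, $\mu_{i,\alpha}>0$ ($1\le i\le k$) with $\mu_{i,\alpha}\to0$ and, for $i\ne j$, $\frac{\mu_{i,\alpha}}{\mu_{j,\alpha}}+\frac{\mu_{j,\alpha}}{\mu_{i,\alpha}}+\frac{d_g(x_{i,\alpha},x_{j,\alpha})^2}{\mu_{i,\alpha}\mu_{j,\alpha}}\to\infty$. $B_{i,\alpha}(x)=\mu_{i,\alpha}^{\frac{n-2}{2}}(\mu_{i,\alpha}^2+\frac{d_g(x_{i,\alpha},x)^2}{n(n-2)})^{-\frac{n-2}{2}}$ for $1\le i\le k$; $B_{0,\alpha}$ is either identically $0$ or identically $1$ (it equals $0$ iff $u_0\equiv0$ and $\ker(\triangle_g+h)=\{0\}$, for given $h\in L^\infty(M)$ and a solution $u_0$ of $\triangle_gu_0+hu_0=|u_0|^{2^*-2}u_0$).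 $\theta_{i,\alpha}(x)=\mu_{i,\alpha}+d_g(x_{i,\alpha},x)$; $\Theta_{i,\alpha}=\theta_{i,\alpha}$ if $n=3$, $\theta_{i,\alpha}^2|\ln\theta_{i,\alpha}|$ if $n=4$, $\theta_{i,\alpha}^2$ if $n\ge5$. *)

theory Defs
  imports "HOL-Analysis.Analysis"
begin

definition crit_exp :: "nat \<Rightarrow> real" where
  "crit_exp n = 2 * real n / (real n - 2)"

definition bubble :: "nat \<Rightarrow> real \<Rightarrow> real \<Rightarrow> real" where
  "bubble n mu d = mu powr ((real n - 2) / 2)
      * (mu\<^sup>2 + d\<^sup>2 / (real n * (real n - 2))) powr (- (real n - 2) / 2)"

text \<open>theta = mu + d; Theta = theta (n=3), theta^2 |ln theta| (n=4), theta^2 (n>=5).\<close>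
definition Theta :: "nat \<Rightarrow> real \<Rightarrow> real" where
  "Theta n t = (if n = 3 then t else if n = 4 then t\<^sup>2 * \<bar>ln t\<bar> else t\<^sup>2)"

end

theory Submission
  imports Defs
begin

text \<open>Put p = 2^* - 1 and \<theta>_i = \<mu>_i + d(x_i, x), which stays below some R because M is compact
  and \<mu>_i \<rightarrow> 0; then \<Theta>_i \<le> K \<theta>_i. Each bubble satisfies \<theta>_i B_i \<le> s(\<mu>_i) (B_i + B_i^(1/p)) with
  s(\<mu>) \<rightarrow> 0 as \<mu> \<rightarrow> 0: where \<theta>_i \<le> \<mu>_i^(1/4) the factor \<theta>_i is small, and elsewhere the decay
  B_i \<le> (C \<mu>_i / \<theta>_i^2)^((n-2)/2) makes B_i^(1 - 1/p) small. Summing gives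
  \<Sum> \<Theta>_i B_i \<le> S (A + A^(1/p)) with A = \<Sum> B_i and S \<rightarrow> 0, and the elementary inequalities
  A^(p-\<tau>) (A + A^(1/p))^\<tau> \<le> 2^\<tau> (A + A^p) for 0 < \<tau> \<le> p and A^p \<le> k^p \<Sum> B_i^p finish the
  estimate.\<close>

lemma mult_abs_ln_le:
  fixes t :: real
  assumes "0 < t"
  shows "t * \<bar>ln t\<bar> \<le> 1 + t\<^sup>2"
proof (cases "t \<le> 1")
  case True
  have "- ln t \<le> 1 / t - 1"
    using ln_le_minus_one[of "1 / t"] assms by (simp add: ln_div)
  with True assms have "t * \<bar>ln t\<bar> \<le> t * (1 / t - 1)"
    by (intro mult_left_mono) auto
  also have "\<dots> = 1 - t"
    using assms by (simp add: field_simps)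
  finally show ?thesis
    using assms by (smt (verit) zero_le_power2)
next
  case False
  with ln_le_minus_one[of t] have "t * \<bar>ln t\<bar> \<le> t * t"
    by (intro mult_left_mono) auto
  then show ?thesis by (simp add: power2_eq_square)
qed

lemma Theta_nonneg: "0 < t \<Longrightarrow> 0 \<le> Theta n t"
  by (simp add: Theta_def)

lemma Theta_le_linear:
  fixes t R :: real
  assumes "0 < t" "t \<le> R"
  shows "Theta n t \<le> (1 + R + R\<^sup>2) * t"
proof -
  have expand: "(1 + R + R\<^sup>2) * t = t + R * t + t * R\<^sup>2"
    by (simp add: algebra_simps)
  have nonneg: "0 \<le> R * t" "0 \<le> t * R\<^sup>2"
    using assms by auto
  have sq: "t\<^sup>2 \<le> R * t"
    using assms by (simp add: power2_eq_square mult_right_mono)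
  have "t * \<bar>ln t\<bar> \<le> 1 + R\<^sup>2"
    using mult_abs_ln_le[OF assms(1)] power_mono[OF assms(2), of 2] assms by linarith
  then have "t * (t * \<bar>ln t\<bar>) \<le> t * (1 + R\<^sup>2)"
    using assms by (intro mult_left_mono) auto
  then have "t\<^sup>2 * \<bar>ln t\<bar> \<le> t + t * R\<^sup>2"
    by (simp add: power2_eq_square algebra_simps)
  then have "t\<^sup>2 * \<bar>ln t\<bar> \<le> (1 + R + R\<^sup>2) * t" "t \<le> (1 + R + R\<^sup>2) * t"
    "t\<^sup>2 \<le> (1 + R + R\<^sup>2) * t"
    using expand nonneg sq assms by linarith+
  then show ?thesis
    by (simp add: Theta_def)
qed

lemma crit_exp_gt_2: "n \<ge> 3 \<Longrightarrow> crit_exp n > 2"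
  by (simp add: crit_exp_def field_simps)

lemma bubble_pos:
  assumes "n \<ge> 3" "0 < \<mu>"
  shows "0 < bubble n \<mu> d"
proof -
  have "0 < \<mu>\<^sup>2 + d\<^sup>2 / (real n * (real n - 2))"
    using assms by (intro add_pos_nonneg) auto
  with assms show ?thesis by (simp add: bubble_def)
qed

lemma bubble_le_decay:
  assumes "n \<ge> 3" "0 < \<mu>" "0 \<le> d"
  shows "bubble n \<mu> d \<le> (2 * (real n * (real n - 2)) * \<mu> / (\<mu> + d)\<^sup>2) powr ((real n - 2) / 2)"
proof -
  define c where "c = real n * (real n - 2)"
  define m where "m = (real n - 2) / 2"
  define Q where "Q = \<mu>\<^sup>2 + d\<^sup>2 / c"
  have "1 * 1 \<le> real n * (real n - 2)"
    using assms by (intro mult_mono) auto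
  then have c: "1 \<le> c" and m: "0 \<le> m"
    using assms by (simp_all add: c_def m_def)
  have Q: "0 < Q"
    unfolding Q_def using assms c by (intro add_pos_nonneg) auto
  have "(\<mu> + d)\<^sup>2 \<le> 2 * \<mu>\<^sup>2 + 2 * d\<^sup>2"
    by (smt (verit) power2_sum zero_le_power2 power2_diff)
  also have "\<dots> \<le> 2 * c * Q"
    using mult_right_mono[OF c, of "\<mu>\<^sup>2"] c by (simp add: Q_def field_simps)
  finally have sq: "(\<mu> + d)\<^sup>2 \<le> 2 * c * Q" .
  have "bubble n \<mu> d = \<mu> powr m * Q powr (- m)"
    unfolding bubble_def Q_def m_def c_def by (simp add: minus_divide_left)
  also have "\<dots> = (\<mu> / Q) powr m"
    unfolding powr_divide powr_minus by (simp add: divide_inverse)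
  also have "\<dots> \<le> (2 * c * \<mu> / (\<mu> + d)\<^sup>2) powr m"
  proof (rule powr_mono2[OF m])
    have "\<mu> / Q = 2 * c * \<mu> / (2 * c * Q)"
      using c by simp
    also have "\<dots> \<le> 2 * c * \<mu> / (\<mu> + d)\<^sup>2"
      using sq Q c assms by (intro divide_left_mono mult_pos_pos) auto
    finally show "\<mu> / Q \<le> 2 * c * \<mu> / (\<mu> + d)\<^sup>2" .
  qed (use assms Q in auto)
  finally show ?thesis
    by (simp add: c_def m_def)
qed

definition interaction_rate :: "real \<Rightarrow> real \<Rightarrow> real \<Rightarrow> real \<Rightarrow> real" where
  "interaction_rate C e R \<mu> = \<mu> powr (1/4) + R * C powr e * \<mu> powr (e/2)"

lemma interaction_rate_nonneg: "0 \<le> R \<Longrightarrow> 0 \<le> interaction_rate C e R \<mu>"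
  by (simp add: interaction_rate_def)

lemma interaction_rate_tendsto_zero:
  assumes "0 < e" "f \<longlonglongrightarrow> 0" "\<And>\<alpha>. 0 \<le> f \<alpha>"
  shows "(\<lambda>\<alpha>. interaction_rate C e R (f \<alpha>)) \<longlonglongrightarrow> 0"
proof -
  have "(\<lambda>\<alpha>. f \<alpha> powr a) \<longlonglongrightarrow> 0" if "0 < a" for a
    using assms that by (intro tendsto_zero_powrI[OF assms(2) tendsto_const]) auto
  from tendsto_add[OF this tendsto_mult[OF tendsto_const this]] assms(1)
  show ?thesis unfolding interaction_rate_def by simp
qed

lemma powr_le_of_decay:
  fixes \<theta> B \<mu> C m q :: real
  assumes "0 < \<mu>" "\<mu> powr (1/4) < \<theta>" "0 < B" "0 \<le> C" "0 \<le> m" "q \<le> 1"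
    and decay: "B \<le> (C * \<mu> / \<theta>\<^sup>2) powr m"
  shows "B powr (1 - q) \<le> C powr (m * (1 - q)) * \<mu> powr (m * (1 - q) / 2)"
proof -
  define e where "e = m * (1 - q)"
  have \<theta>: "0 < \<theta>"
    using le_less_trans[OF powr_ge_zero assms(2)] .
  have "\<mu> powr (1/2) = (\<mu> powr (1/4))\<^sup>2"
    using assms by (simp add: power2_eq_square powr_add[symmetric])
  also have "\<dots> < \<theta>\<^sup>2"
    using assms by (intro power_strict_mono) auto
  finally have "\<mu> powr (1/2) * \<mu> powr (1/2) \<le> \<mu> powr (1/2) * \<theta>\<^sup>2"
    by (intro mult_left_mono) auto
  then have "\<mu> / \<theta>\<^sup>2 \<le> \<mu> powr (1/2)"
    using assms \<theta> by (simp add: powr_add[symmetric] divide_simps mult.commute)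
  then have "C * \<mu> / \<theta>\<^sup>2 \<le> C * \<mu> powr (1/2)"
    using assms mult_left_mono by fastforce
  have "B powr (1 - q) \<le> ((C * \<mu> / \<theta>\<^sup>2) powr m) powr (1 - q)"
    using decay assms by (intro powr_mono2) auto
  also have "\<dots> = (C * \<mu> / \<theta>\<^sup>2) powr e"
    by (simp add: powr_powr e_def)
  also have "\<dots> \<le> (C * \<mu> powr (1/2)) powr e"
    using \<open>C * \<mu> / \<theta>\<^sup>2 \<le> C * \<mu> powr (1/2)\<close> assms by (intro powr_mono2) (auto simp: e_def)
  also have "\<dots> = C powr e * \<mu> powr (e/2)"
    using assms by (simp add: powr_mult powr_powr)
  finally show ?thesis
    by (simp add: e_def)
qed

text \<open>The threshold \<mu>^(1/4) separates the two regimes: below it \<theta> is small, above it B^(1-q) is.\<close>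
lemma mult_le_interaction_rate:
  fixes \<theta> B \<mu> C m q R :: real
  assumes "0 < \<mu>" "0 < \<theta>" "\<theta> \<le> R" "0 < B" "0 \<le> C" "0 \<le> m" "q \<le> 1"
    and decay: "B \<le> (C * \<mu> / \<theta>\<^sup>2) powr m"
  shows "\<theta> * B \<le> interaction_rate C (m * (1 - q)) R \<mu> * (B + B powr q)"
proof -
  define e where "e = m * (1 - q)"
  define s where "s = interaction_rate C e R \<mu>"
  have s: "\<mu> powr (1/4) \<le> s" "R * C powr e * \<mu> powr (e/2) \<le> s"
    using assms by (simp_all add: s_def interaction_rate_def)
  have s0: "0 \<le> s"
    using order_trans[OF powr_ge_zero s(1)] .
  have "\<theta> * B \<le> s * (B + B powr q)"
  proof (cases "\<theta> \<le> \<mu> powr (1/4)")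
    case True
    then have "\<theta> * B \<le> s * B"
      using s assms by (intro mult_right_mono) auto
    also have "\<dots> \<le> s * (B + B powr q)"
      using s0 by (intro mult_left_mono) auto
    finally show ?thesis .
  next
    case False
    have "\<theta> * B = \<theta> * B powr (1 - q) * B powr q"
      using assms by (simp add: powr_add[symmetric])
    also have "\<dots> \<le> R * (C powr e * \<mu> powr (e/2)) * B powr q"
      using powr_le_of_decay[OF assms(1) _ assms(4-7) decay] False assms
      by (intro mult_right_mono mult_mono) (auto simp: e_def)
    also have "\<dots> \<le> s * (B + B powr q)"
      using s s0 assms by (intro mult_mono) (auto simp: mult.assoc)
    finally show ?thesis .
  qed
  then show ?thesis
    by (simp add: s_def e_def)
qed

lemma Theta_mult_bubble_le:
  fixes n :: nat and \<mu> d R :: real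
  defines "e \<equiv> (real n - 2) / 2 * (1 - 1 / (crit_exp n - 1))"
  assumes n: "n \<ge> 3" and "0 < \<mu>" "0 \<le> d" "\<mu> + d \<le> R"
  shows "Theta n (\<mu> + d) * bubble n \<mu> d
    \<le> (1 + R + R\<^sup>2) * interaction_rate (2 * (real n * (real n - 2))) e R \<mu>
        * (bubble n \<mu> d + bubble n \<mu> d powr (1 / (crit_exp n - 1)))"
proof -
  have B: "0 < bubble n \<mu> d"
    using bubble_pos[OF n \<open>0 < \<mu>\<close>] .
  have K: "0 \<le> 1 + R + R\<^sup>2"
    using assms by (intro add_nonneg_nonneg) auto
  have "1 < crit_exp n - 1"
    using crit_exp_gt_2[OF n] by simp
  then have "(\<mu> + d) * bubble n \<mu> d
      \<le> interaction_rate (2 * (real n * (real n - 2))) e R \<mu>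
        * (bubble n \<mu> d + bubble n \<mu> d powr (1 / (crit_exp n - 1)))"
    using mult_le_interaction_rate[where q = "1 / (crit_exp n - 1)", OF _ _ _ B _ _ _
        bubble_le_decay[OF n \<open>0 < \<mu>\<close> \<open>0 \<le> d\<close>]] assms
    by (simp add: e_def)
  then have "(1 + R + R\<^sup>2) * ((\<mu> + d) * bubble n \<mu> d)
      \<le> (1 + R + R\<^sup>2) * (interaction_rate (2 * (real n * (real n - 2))) e R \<mu>
        * (bubble n \<mu> d + bubble n \<mu> d powr (1 / (crit_exp n - 1))))"
    using K by (rule mult_left_mono)
  moreover have "Theta n (\<mu> + d) * bubble n \<mu> d \<le> (1 + R + R\<^sup>2) * ((\<mu> + d) * bubble n \<mu> d)"
    using Theta_le_linear[of "\<mu> + d" R] assms B by (simp add: add_pos_nonneg mult_right_mono)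
  ultimately show ?thesis
    by (simp add: mult.assoc)
qed

lemma powr_diff_mult_sum_powr_le:
  fixes A p \<tau> :: real
  assumes "0 < A" "0 < \<tau>" "\<tau> \<le> p" "1 < p"
  shows "A powr (p - \<tau>) * (A + A powr (1/p)) powr \<tau> \<le> 2 powr \<tau> * (A + A powr p)"
proof (cases "1 \<le> A")
  case True
  have "A powr (1/p) \<le> A powr 1"
    using True assms by (intro powr_mono) auto
  then have "(A + A powr (1/p)) powr \<tau> \<le> (2 * A) powr \<tau>"
    using assms by (intro powr_mono2) auto
  then have "A powr (p - \<tau>) * (A + A powr (1/p)) powr \<tau> \<le> A powr (p - \<tau>) * (2 * A) powr \<tau>"
    by (intro mult_left_mono) auto
  also have "\<dots> = 2 powr \<tau> * A powr p"
    using assms by (simp add: powr_mult powr_add[symmetric] mult.left_commute)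
  finally show ?thesis
    using assms by (smt (verit) mult_left_mono powr_ge_zero)
next
  case False
  have "A powr 1 \<le> A powr (1/p)"
    using False assms by (intro powr_mono') auto
  then have "(A + A powr (1/p)) powr \<tau> \<le> (2 * A powr (1/p)) powr \<tau>"
    using assms by (intro powr_mono2) auto
  then have "A powr (p - \<tau>) * (A + A powr (1/p)) powr \<tau> \<le> A powr (p - \<tau>) * (2 * A powr (1/p)) powr \<tau>"
    by (intro mult_left_mono) auto
  also have "\<dots> = 2 powr \<tau> * A powr (1 + (p - \<tau>) * (1 - 1/p))"
    using assms by (simp add: powr_mult powr_powr powr_add[symmetric] field_simps)
  also have "\<dots> \<le> 2 powr \<tau> * A powr 1"
    using False assms mult_nonneg_nonneg[of "p - \<tau>" "1 - 1/p"]
    by (intro mult_left_mono powr_mono') auto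
  finally show ?thesis
    using assms by (smt (verit) mult_left_mono powr_ge_zero powr_one_gt_zero_iff)
qed

lemma powr_interpolation_le:
  fixes A T S p \<tau> :: real
  assumes A: "0 < A" and "0 \<le> T" and \<tau>: "0 < \<tau>" "\<tau> \<le> p" and p: "1 < p"
    and S: "0 \<le> S" and T: "T \<le> S * (A + A powr (1/p))"
  shows "A powr (p - \<tau>) * T powr \<tau> \<le> (2 * S) powr \<tau> * (A + A powr p)"
proof -
  have "A powr (p - \<tau>) * T powr \<tau> \<le> A powr (p - \<tau>) * (S * (A + A powr (1/p))) powr \<tau>"
    using assms by (intro mult_left_mono powr_mono2) auto
  also have "\<dots> = S powr \<tau> * (A powr (p - \<tau>) * (A + A powr (1/p)) powr \<tau>)"
    using S A by (simp add: powr_mult mult_ac)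
  also have "\<dots> \<le> S powr \<tau> * (2 powr \<tau> * (A + A powr p))"
    using powr_diff_mult_sum_powr_le[OF A \<tau> p] by (intro mult_left_mono) auto
  also have "\<dots> = (2 * S) powr \<tau> * (A + A powr p)"
    using S by (simp add: powr_mult mult_ac)
  finally show ?thesis .
qed

lemma sum_powr_le_card_powr_mult:
  fixes B :: "'i \<Rightarrow> real"
  assumes "finite I" "\<And>i. i \<in> I \<Longrightarrow> 0 \<le> B i" "0 \<le> p"
  shows "(\<Sum>i\<in>I. B i) powr p \<le> real (card I) powr p * (\<Sum>i\<in>I. B i powr p)"
proof (cases "I = {}")
  case False
  obtain j where j: "j \<in> I" "Max (B ` I) = B j"
    using obtains_MAX[OF assms(1) False] .
  then have "(\<Sum>i\<in>I. B i) \<le> real (card I) * B j"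
    using assms(1) by (intro sum_bounded_above) (metis Max_ge finite_imageI image_eqI)
  then have "(\<Sum>i\<in>I. B i) powr p \<le> (real (card I) * B j) powr p"
    using assms by (intro powr_mono2 sum_nonneg) auto
  also have "\<dots> = real (card I) powr p * B j powr p"
    using assms j by (simp add: powr_mult)
  also have "\<dots> \<le> real (card I) powr p * (\<Sum>i\<in>I. B i powr p)"
    using assms j by (intro mult_left_mono member_le_sum) auto
  finally show ?thesis .
qed simp

lemma bubble_sum_interaction_le:
  fixes n :: nat and \<tau> R :: real and \<mu> d :: "'i \<Rightarrow> real"
  defines "p \<equiv> crit_exp n - 1"
    and "e \<equiv> (real n - 2) / 2 * (1 - 1 / (crit_exp n - 1))"
  assumes n: "n \<ge> 3" and I: "finite I" "I \<noteq> {}" and \<tau>: "0 < \<tau>" "\<tau> \<le> p"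
    and \<mu>: "\<And>i. i \<in> I \<Longrightarrow> 0 < \<mu> i" and d: "\<And>i. i \<in> I \<Longrightarrow> 0 \<le> d i"
    and R: "\<And>i. i \<in> I \<Longrightarrow> \<mu> i + d i \<le> R"
  shows "(\<Sum>i\<in>I. bubble n (\<mu> i) (d i)) powr (p - \<tau>)
           * (\<Sum>i\<in>I. Theta n (\<mu> i + d i) * bubble n (\<mu> i) (d i)) powr \<tau>
         \<le> (2 * (1 + R + R\<^sup>2) * (\<Sum>i\<in>I. interaction_rate (2 * (real n * (real n - 2))) e R (\<mu> i)))
               powr \<tau> * real (card I) powr p
           * ((\<Sum>i\<in>I. bubble n (\<mu> i) (d i)) + (\<Sum>i\<in>I. bubble n (\<mu> i) (d i) powr p))"
proof -
  define B where "B i = bubble n (\<mu> i) (d i)" for i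
  define A where "A = (\<Sum>i\<in>I. B i)"
  define r where "r i = (1 + R + R\<^sup>2) * interaction_rate (2 * (real n * (real n - 2))) e R (\<mu> i)" for i
  define S where "S = (\<Sum>i\<in>I. r i)"
  have p: "1 < p"
    using crit_exp_gt_2[OF n] by (simp add: p_def)
  have "0 \<le> R"
    using I \<mu> d R by (fastforce intro: add_nonneg_nonneg)
  then have r0: "0 \<le> r i" for i
    by (simp add: r_def interaction_rate_nonneg)
  have B: "0 < B i" if "i \<in> I" for i
    using bubble_pos[OF n \<mu>[OF that]] by (simp add: B_def)
  have A: "0 < A"
    using B I by (simp add: A_def sum_pos)
  have BA: "B i \<le> A" if "i \<in> I" for i
    unfolding A_def using I(1) that B by (intro member_le_sum) (auto intro: less_imp_le)
  have "Theta n (\<mu> i + d i) * B i \<le> r i * (A + A powr (1/p))" if i: "i \<in> I" for i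
  proof -
    have "Theta n (\<mu> i + d i) * B i \<le> r i * (B i + B i powr (1/p))"
      using Theta_mult_bubble_le[OF n \<mu>[OF i] d[OF i] R[OF i]] by (simp add: B_def r_def e_def p_def)
    also have "\<dots> \<le> r i * (A + A powr (1/p))"
      using BA[OF i] B[OF i] p r0[of i] by (intro mult_left_mono add_mono powr_mono2) auto
    finally show ?thesis .
  qed
  then have T: "(\<Sum>i\<in>I. Theta n (\<mu> i + d i) * B i) \<le> S * (A + A powr (1/p))"
    unfolding S_def sum_distrib_right by (rule sum_mono)
  have "0 \<le> Theta n (\<mu> i + d i) * B i" if "i \<in> I" for i
    using Theta_nonneg[of "\<mu> i + d i" n] \<mu>[OF that] d[OF that] B[OF that] by simp
  then have T0: "0 \<le> (\<Sum>i\<in>I. Theta n (\<mu> i + d i) * B i)"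
    by (rule sum_nonneg)
  have S0: "0 \<le> S"
    using r0 by (simp add: S_def sum_nonneg)
  have "A powr (p - \<tau>) * (\<Sum>i\<in>I. Theta n (\<mu> i + d i) * B i) powr \<tau> \<le> (2 * S) powr \<tau> * (A + A powr p)"
    by (rule powr_interpolation_le[OF A T0 \<tau> p S0 T])
  also have "\<dots> \<le> (2 * S) powr \<tau> * (real (card I) powr p * (A + (\<Sum>i\<in>I. B i powr p)))"
  proof (rule mult_left_mono)
    have "1 \<le> real (card I) powr p"
      using I p by (intro ge_one_powr_ge_zero) (auto simp: Suc_le_eq card_gt_0_iff)
    then show "A + A powr p \<le> real (card I) powr p * (A + (\<Sum>i\<in>I. B i powr p))"
      using sum_powr_le_card_powr_mult[OF I(1), of B p] A B p
      by (simp add: A_def distrib_left less_imp_le) (smt (verit) mult_le_cancel_right1)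
  qed simp
  finally show ?thesis
    by (simp only: A_def B_def S_def r_def sum_distrib_left mult.assoc)
qed

lemma finite_convergent_uniformly_bounded:
  fixes f :: "'i \<Rightarrow> nat \<Rightarrow> 'a::real_normed_vector"
  assumes "finite I" "\<And>i. i \<in> I \<Longrightarrow> convergent (f i)"
  obtains K where "\<And>i \<alpha>. i \<in> I \<Longrightarrow> norm (f i \<alpha>) \<le> K"
proof -
  have "\<forall>i\<in>I. \<exists>K. \<forall>\<alpha>. norm (f i \<alpha>) \<le> K"
    using assms(2) convergent_imp_Bseq Bseq_def by metis
  then obtain K where "\<And>i \<alpha>. i \<in> I \<Longrightarrow> norm (f i \<alpha>) \<le> K i"
    by metis
  then show ?thesis
    using assms(1) by (intro that[of "Max (K ` I)"]) (meson Max_ge finite_imageI image_eqI order_trans)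
qed

lemma convergent_centre_distance_bounded:
  fixes M :: "'a::metric_space set" and \<mu> :: "'i \<Rightarrow> nat \<Rightarrow> real"
  assumes "compact M" "finite I" "\<And>i. i \<in> I \<Longrightarrow> convergent (\<mu> i)"
    and centres: "\<And>i \<alpha>. i \<in> I \<Longrightarrow> xc i \<alpha> \<in> M"
  obtains R where "\<And>i \<alpha> x. i \<in> I \<Longrightarrow> x \<in> M \<Longrightarrow> \<mu> i \<alpha> + dist (xc i \<alpha>) x \<le> R"
proof -
  obtain K where K: "\<And>i \<alpha>. i \<in> I \<Longrightarrow> norm (\<mu> i \<alpha>) \<le> K"
    using finite_convergent_uniformly_bounded[of I \<mu>] assms(2,3) by blast
  have "\<mu> i \<alpha> + dist (xc i \<alpha>) x \<le> K + diameter M" if "i \<in> I" "x \<in> M" for i \<alpha> x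
  proof -
    have "\<mu> i \<alpha> \<le> K"
      using K[OF that(1), of \<alpha>] by simp
    moreover have "dist (xc i \<alpha>) x \<le> diameter M"
      using centres[OF that(1)] that(2) by (intro diameter_bounded_bound compact_imp_bounded assms(1))
    ultimately show ?thesis
      by simp
  qed
  then show ?thesis
    using that by blast
qed

text \<open>The summand \<open>1/(\<alpha> + 1)\<close> only makes the majorant positive.\<close>
lemma tendsto_zero_positive_majorant:
  fixes f :: "nat \<Rightarrow> real"
  assumes "f \<longlonglongrightarrow> 0"
  obtains \<sigma> where "\<And>\<alpha>. 0 < \<sigma> \<alpha>" "\<sigma> \<longlonglongrightarrow> 0" "\<And>\<alpha>. f \<alpha> \<le> \<sigma> \<alpha>"
proof (rule that)
  show "(\<lambda>\<alpha>. \<bar>f \<alpha>\<bar> + inverse (real (Suc \<alpha>))) \<longlonglongrightarrow> 0"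
    using tendsto_add_zero[OF tendsto_rabs_zero[OF assms] LIMSEQ_inverse_real_of_nat] .
  fix \<alpha>
  have "0 < inverse (real (Suc \<alpha>))"
    by simp
  then show "0 < \<bar>f \<alpha>\<bar> + inverse (real (Suc \<alpha>))" "f \<alpha> \<le> \<bar>f \<alpha>\<bar> + inverse (real (Suc \<alpha>))"
    by linarith+
qed

theorem lemmaA2:
  fixes M :: "'a::metric_space set"
    and n k :: nat
    and \<tau> :: real
    and \<mu> :: "nat \<Rightarrow> nat \<Rightarrow> real"
    and xc :: "nat \<Rightarrow> nat \<Rightarrow> 'a"
  assumes M_compact: "compact M"
    and n_ge: "n \<ge> 3"
    and k_ge: "k \<ge> 1"
    and tau_pos: "0 < \<tau>"
    and tau_le: "\<tau> \<le> crit_exp n - 1"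
    and centres_in: "\<And>i \<alpha>. i \<in> {1..k} \<Longrightarrow> xc i \<alpha> \<in> M"
    and mu_pos: "\<And>i \<alpha>. i \<in> {1..k} \<Longrightarrow> \<mu> i \<alpha> > 0"
    and mu_to_0: "\<And>i. i \<in> {1..k} \<Longrightarrow> (\<lambda>\<alpha>. \<mu> i \<alpha>) \<longlonglongrightarrow> 0"
    and separated: "\<And>i j. i \<in> {1..k} \<Longrightarrow> j \<in> {1..k} \<Longrightarrow> i \<noteq> j \<Longrightarrow>
        filterlim (\<lambda>\<alpha>. \<mu> i \<alpha> / \<mu> j \<alpha> + \<mu> j \<alpha> / \<mu> i \<alpha>
                        + (dist (xc i \<alpha>) (xc j \<alpha>))\<^sup>2 / (\<mu> i \<alpha> * \<mu> j \<alpha>))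
                  at_top sequentially"
  shows "\<exists>\<sigma> :: nat \<Rightarrow> real. (\<forall>\<alpha>. \<sigma> \<alpha> > 0) \<and> \<sigma> \<longlonglongrightarrow> 0 \<and>
     (\<forall>B0 \<in> {0::real, 1}. \<forall>\<alpha>. \<forall>x \<in> M.
        (\<Sum>i=1..k. bubble n (\<mu> i \<alpha>) (dist (xc i \<alpha>) x)) powr (crit_exp n - 1 - \<tau>)
        * (\<Sum>i=1..k. Theta n (\<mu> i \<alpha> + dist (xc i \<alpha>) x)
                       * bubble n (\<mu> i \<alpha>) (dist (xc i \<alpha>) x)) powr \<tau>
        \<le> \<sigma> \<alpha> * (B0 + (\<Sum>i=1..k. bubble n (\<mu> i \<alpha>) (dist (xc i \<alpha>) x))
                     + (\<Sum>i=1..k. bubble n (\<mu> i \<alpha>) (dist (xc i \<alpha>) x) powr (crit_exp n - 1))))"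
proof -
  \<comment> \<open>The estimate is pointwise.\<close>
  define p where "p = crit_exp n - 1"
  define e where "e = (real n - 2) / 2 * (1 - 1 / (crit_exp n - 1))"
  define C where "C = 2 * (real n * (real n - 2))"
  have "1 < crit_exp n - 1"
    using crit_exp_gt_2[OF n_ge] by simp
  then have e: "0 < e"
    unfolding e_def using n_ge by (intro mult_pos_pos) (auto simp: field_simps)
  have "convergent (\<mu> i)" if "i \<in> {1..k}" for i
    using mu_to_0[OF that] by (auto simp: convergent_def)
  then obtain R where R: "\<And>i \<alpha> x. i \<in> {1..k} \<Longrightarrow> x \<in> M \<Longrightarrow> \<mu> i \<alpha> + dist (xc i \<alpha>) x \<le> R"
    using convergent_centre_distance_bounded[of M "{1..k}" \<mu> xc] M_compact centres_in by blast
  have "\<mu> 1 0 + dist (xc 1 0) (xc 1 0) \<le> R"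
    using R[of 1 "xc 1 0" 0] centres_in[of 1 0] k_ge by simp
  then have R0: "0 \<le> R"
    using mu_pos[of 1 0] k_ge by simp
  define S where "S \<alpha> = 2 * (1 + R + R\<^sup>2) * (\<Sum>i=1..k. interaction_rate C e R (\<mu> i \<alpha>))" for \<alpha>
  have "(\<lambda>\<alpha>. interaction_rate C e R (\<mu> i \<alpha>)) \<longlonglongrightarrow> 0" if "i \<in> {1..k}" for i
    using mu_pos[OF that] by (intro interaction_rate_tendsto_zero[OF e mu_to_0[OF that]] less_imp_le)
  then have "(\<lambda>\<alpha>. S \<alpha>) \<longlonglongrightarrow> 0"
    unfolding S_def by (intro tendsto_mult_right_zero tendsto_null_sum)
  then have "(\<lambda>\<alpha>. S \<alpha> powr \<tau> * real k powr p) \<longlonglongrightarrow> 0"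
    using tau_pos R0 by (intro tendsto_mult_left_zero tendsto_zero_powrI[OF _ tendsto_const])
      (auto simp: S_def interaction_rate_nonneg sum_nonneg)
  then obtain \<sigma> where \<sigma>: "\<And>\<alpha>. 0 < \<sigma> \<alpha>" "\<sigma> \<longlonglongrightarrow> 0" "\<And>\<alpha>. S \<alpha> powr \<tau> * real k powr p \<le> \<sigma> \<alpha>"
    using tendsto_zero_positive_majorant by metis
  have bound: "(\<Sum>i=1..k. bubble n (\<mu> i \<alpha>) (dist (xc i \<alpha>) x)) powr (crit_exp n - 1 - \<tau>)
        * (\<Sum>i=1..k. Theta n (\<mu> i \<alpha> + dist (xc i \<alpha>) x)
                       * bubble n (\<mu> i \<alpha>) (dist (xc i \<alpha>) x)) powr \<tau>
        \<le> \<sigma> \<alpha> * (B0 + (\<Sum>i=1..k. bubble n (\<mu> i \<alpha>) (dist (xc i \<alpha>) x))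
                     + (\<Sum>i=1..k. bubble n (\<mu> i \<alpha>) (dist (xc i \<alpha>) x) powr (crit_exp n - 1)))"
    (is "?lhs \<le> \<sigma> \<alpha> * (B0 + ?A + ?P)")
    if "B0 \<in> {0, 1}" "x \<in> M" for B0 \<alpha> x
  proof -
    have "?lhs \<le> S \<alpha> powr \<tau> * real k powr p * (?A + ?P)"
      using bubble_sum_interaction_le[where I = "{1..k}" and \<mu> = "\<lambda>i. \<mu> i \<alpha>"
          and d = "\<lambda>i. dist (xc i \<alpha>) x" and R = R and \<tau> = \<tau> and n = n]
        n_ge k_ge tau_pos tau_le mu_pos R[OF _ that(2)]
      by (simp add: S_def C_def p_def e_def)
    also have "\<dots> \<le> \<sigma> \<alpha> * (B0 + ?A + ?P)"
      using that(1) \<sigma>(1,3)[of \<alpha>] bubble_pos[OF n_ge mu_pos]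
      by (intro mult_mono add_nonneg_nonneg sum_nonneg) (auto simp: less_imp_le)
    finally show ?thesis .
  qed
  show ?thesis
    by (intro exI[of _ \<sigma>] conjI allI ballI \<sigma>(1,2) bound)
qed

end
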